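(* The three-dimensional closed convex cone $\mathcal{P}^{s+}_{4,3}$ is a polyhedral cone with exactly four extremal rays, generated respectively by $g_1=T^4_{2,1}-3S^4_{1,1,1}$, $g_2=3S^4_3+3S^4_{1,1,1}-2T^4_{2,1}$, $g_3=S^4_{1,1,1}$, $g_4=S^4_3+3S^4_{1,1,1}-T^4_{2,1}$. Moreover each $g_i$ is characterized in $\mathcal{P}^{s+}_{4,3}$ by equality conditions: if $f\in\mathcal{P}^{s+}_{4,3}$ satisfies $f(1,0,0,0)=f(1,1,1,1)=0$ then $f\in\mathbb{R}_{\ge0}g_1$; $f(1,1,1,0)=f(1,1,1,1)=0$ then $f\in\mathbb{R}_{\ge0}g_2$; $f(1,0,0,0)=f(1,1,0,0)=0$ then $f\in\mathbb{R}_{\ge0}g_3$; $f(1,1,0,0)=f(1,1,1,0)=0$ then $f\in\mathbb{R}_{\ge0}g_4$.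
   Context: Variables $x_1,x_2,x_3,x_4$ (also written $a,b,c,d$). $S^4_3=\sum_{i=1}^4x_i^3$, $T^4_{2,1}=\sum_{i=1}^4x_i^2\sum_{j\ne i}x_j$, $S^4_{1,1,1}=bcd+acd+abd+abc$. $\mathcal{H}^s_{4,3}$ is the real vector space of symmetric homogeneous cubic forms in $\mathbb{R}[a,b,c,d]$ and $\mathcal{P}^{s+}_{4,3}=\{f\in\mathcal{H}^s_{4,3}: f(x)\ge0 \text{ for all } x\in\mathbb{R}_{\ge0}^4\}$. For a closed convex cone $\mathcal{P}$, $f\in\mathcal{P}\setminus\{0\}$ is extremal (generates an extremal ray) if $f=g+h$ with $g,h\in\mathcal{P}$ forces $g,h\in\mathbb{R}_{\ge0}f$. *)

theory Defs
  imports "HOL-Analysis.Analysis" "HOL-Library.Numeral_Type"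
begin

text \<open>Points of R^4 are vectors of type real^4; coordinates x$0,x$1,x$2,x$3 are a,b,c,d.
  Forms are identified with the polynomial functions they define (R is infinite).\<close>

type_synonym form4 = "real^4 \<Rightarrow> real"

definition S3 :: form4 where
  "S3 x = (\<Sum>i\<in>UNIV. (x$i)^3)"

definition T21 :: form4 where
  "T21 x = (\<Sum>i\<in>UNIV. (x$i)^2 * (\<Sum>j\<in>UNIV-{i}. x$j))"

definition S111 :: form4 where
  "S111 x = (\<Sum>i\<in>UNIV. \<Prod>j\<in>UNIV-{i}. x$j)"

definition cubic_form4 :: "form4 \<Rightarrow> bool" where
  "cubic_form4 f \<longleftrightarrow> (\<exists>c :: 4 \<Rightarrow> 4 \<Rightarrow> 4 \<Rightarrow> real.
      \<forall>x. f x = (\<Sum>i\<in>UNIV. \<Sum>j\<in>UNIV. \<Sum>k\<in>UNIV. c i j k * x$i * x$j * x$k))"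

definition Hs43 :: "form4 set" where
  "Hs43 = {f. cubic_form4 f \<and> (\<forall>\<sigma> x. \<sigma> permutes (UNIV::4 set) \<longrightarrow> f (\<chi> i. x $ \<sigma> i) = f x)}"

definition Ps43 :: "form4 set" where
  "Ps43 = {f \<in> Hs43. \<forall>x. (\<forall>i. 0 \<le> x$i) \<longrightarrow> 0 \<le> f x}"

definition ray :: "form4 \<Rightarrow> form4 set" where
  "ray f = {(\<lambda>x. t * f x) | t. t \<ge> 0}"

definition extremal_in :: "form4 set \<Rightarrow> form4 \<Rightarrow> bool" where
  "extremal_in P f \<longleftrightarrow> f \<in> P \<and> f \<noteq> (\<lambda>x. 0) \<and>
     (\<forall>g h. g \<in> P \<longrightarrow> h \<in> P \<longrightarrow> f = (\<lambda>x. g x + h x) \<longrightarrow> g \<in> ray f \<and> h \<in> ray f)"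

definition g1 :: form4 where "g1 x = T21 x - 3 * S111 x"
definition g2 :: form4 where "g2 x = 3 * S3 x + 3 * S111 x - 2 * T21 x"
definition g3 :: form4 where "g3 x = S111 x"
definition g4 :: form4 where "g4 x = S3 x + 3 * S111 x - T21 x"

definition gen :: "nat \<Rightarrow> form4" where
  "gen i = (if i = 1 then g1 else if i = 2 then g2 else if i = 3 then g3 else g4)"

end

theory Submission
  imports Defs
begin

text \<open>A symmetric cubic is determined by its symmetrised coefficient tensor, which symmetry
  forces to take only three values; so it is \<open>\<alpha> S3 + \<beta> T21 + \<gamma> S111\<close>, and it is determined by
  its values at \<open>e1, e1+e2, e1+e2+e3\<close>. Each \<open>g_i\<close> is nonnegative on the orthant, since at a point
  with sorted coordinates \<open>(s+u+y+z, s+u+y, s+u, s)\<close> it is a polynomial in \<open>s, u, y, z\<close> with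
  nonnegative coefficients, and it vanishes at two of the four test points
  \<open>e1, e1+e2, e1+e2+e3, (1,1,1,1)\<close>. Conversely, a symmetric cubic that is nonnegative at the
  four test points is a nonnegative combination of the \<open>g_i\<close>, so the cone is generated by them.
  A form of the cone vanishing at the two test points of \<open>g_i\<close> is a multiple of \<open>g_i\<close>; as every
  form of the cone is nonnegative there, the ray of \<open>g_i\<close> is extremal, and no other ray is, because
  every form of the cone is a sum of multiples of the \<open>g_i\<close>.\<close>

lemma vector4_nth [simp]:
  "(vector [a, b, c, d] :: real^4) $ 1 = a" "(vector [a, b, c, d] :: real^4) $ 2 = b"
  "(vector [a, b, c, d] :: real^4) $ 3 = c" "(vector [a, b, c, d] :: real^4) $ 4 = d"
  unfolding vector_def by simp_all

lemma vector4_eta: "(x :: real^4) = vector [x$1, x$2, x$3, x$4]"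
  by (simp add: vec_eq_iff forall_4)

lemma UNIV4_minus:
  "UNIV - {1::4} = {2,3,4}" "UNIV - {2::4} = {1,3,4}" "UNIV - {3::4} = {1,2,4}" "UNIV - {4::4} = {1,2,3}"
  using exhaust_4 by auto

definition sym_cubic :: "real \<Rightarrow> real \<Rightarrow> real \<Rightarrow> form4" where
  "sym_cubic \<alpha> \<beta> \<gamma> x = \<alpha> * S3 x + \<beta> * T21 x + \<gamma> * S111 x"

lemma sym_cubic_eq: "sym_cubic \<alpha> \<beta> \<gamma> x =
    \<alpha> * ((x$1)^3 + (x$2)^3 + (x$3)^3 + (x$4)^3)
  + \<beta> * ((x$1)^2 * (x$2 + x$3 + x$4) + (x$2)^2 * (x$1 + x$3 + x$4)
       + (x$3)^2 * (x$1 + x$2 + x$4) + (x$4)^2 * (x$1 + x$2 + x$3))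
  + \<gamma> * (x$2 * x$3 * x$4 + x$1 * x$3 * x$4 + x$1 * x$2 * x$4 + x$1 * x$2 * x$3)"
  by (simp add: sym_cubic_def S3_def T21_def S111_def sum_4 UNIV4_minus algebra_simps)

lemma sym_cubic_at:
  "sym_cubic \<alpha> \<beta> \<gamma> (vector [1,0,0,0]) = \<alpha>"
  "sym_cubic \<alpha> \<beta> \<gamma> (vector [1,1,0,0]) = 2*\<alpha> + 2*\<beta>"
  "sym_cubic \<alpha> \<beta> \<gamma> (vector [1,1,1,0]) = 3*\<alpha> + 6*\<beta> + \<gamma>"
  "sym_cubic \<alpha> \<beta> \<gamma> (vector [1,1,1,1]) = 4*\<alpha> + 12*\<beta> + 4*\<gamma>"
  by (simp_all add: sym_cubic_eq)

lemma sym_cubic_inject: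
  assumes "sym_cubic \<alpha> \<beta> \<gamma> = sym_cubic \<alpha>' \<beta>' \<gamma>'"
  shows "\<alpha> = \<alpha>' \<and> \<beta> = \<beta>' \<and> \<gamma> = \<gamma>'"
  using sym_cubic_at[of \<alpha> \<beta> \<gamma>] sym_cubic_at[of \<alpha>' \<beta>' \<gamma>'] unfolding assms by auto

lemma sym_cubic_in_Hs43: "sym_cubic \<alpha> \<beta> \<gamma> \<in> Hs43"
proof -
  have "cubic_form4 (sym_cubic \<alpha> \<beta> \<gamma>)"
    unfolding cubic_form4_def
    by (rule exI[where x = "\<lambda>i j k. if i = j \<and> j = k then \<alpha> else if i = j then \<beta>
                              else if j \<noteq> k \<and> i \<noteq> k then \<gamma> / 6 else 0"])
       (simp add: sum_4 sym_cubic_eq algebra_simps power2_eq_square power3_eq_cube)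
  moreover
  define p :: "nat \<Rightarrow> real^4 \<Rightarrow> real" where "p k x = (\<Sum>i\<in>UNIV. (x$i)^k)" for k x
  \<comment> \<open>Newton's identities: S3 = p3, T21 = p2 p1 - p3 and 6 S111 = p1^3 - 3 p1 p2 + 2 p3.\<close>
  have "sym_cubic \<alpha> \<beta> \<gamma> x = \<alpha> * p 3 x + \<beta> * (p 2 x * p 1 x - p 3 x)
       + \<gamma> * (p 1 x ^ 3 - 3 * p 1 x * p 2 x + 2 * p 3 x) / 6" for x
    by (simp add: p_def sum_4 sym_cubic_eq algebra_simps power2_eq_square power3_eq_cube)
  moreover have "p k (\<chi> i. x $ \<sigma> i) = p k x" if "\<sigma> permutes UNIV" for k x \<sigma>
    using sum.permute[OF that, of "\<lambda>i. (x$i)^k"] by (simp add: p_def)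
  ultimately show ?thesis unfolding Hs43_def by simp
qed

lemma Hs43_transpose:
  assumes "f \<in> Hs43" and "\<forall>i. y $ i = x $ Transposition.transpose p q i"
  shows "f x = f y"
proof -
  have "y = (\<chi> i. x $ Transposition.transpose p q i)"
    using assms(2) by (simp add: vec_eq_iff)
  then show ?thesis
    using assms(1) permutes_swap_id[of p UNIV q] unfolding Hs43_def by simp
qed

text \<open>These are permutative rewrite rules, which the simplifier applies as ordered rewriting:
  it sorts the coordinates of explicit points.\<close>
lemma Hs43_swap:
  assumes "f \<in> Hs43"
  shows "f (vector [a,b,c,d]) = f (vector [b,a,c,d])"
    and "f (vector [a,b,c,d]) = f (vector [a,c,b,d])"
    and "f (vector [a,b,c,d]) = f (vector [a,b,d,c])"
proof -
  show "f (vector [a,b,c,d]) = f (vector [b,a,c,d])"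
    by (rule Hs43_transpose[OF assms, where p = 1 and q = 2]) (simp add: forall_4 Transposition.transpose_def)
  show "f (vector [a,b,c,d]) = f (vector [a,c,b,d])"
    by (rule Hs43_transpose[OF assms, where p = 2 and q = 3]) (simp add: forall_4 Transposition.transpose_def)
  show "f (vector [a,b,c,d]) = f (vector [a,b,d,c])"
    by (rule Hs43_transpose[OF assms, where p = 3 and q = 4]) (simp add: forall_4 Transposition.transpose_def)
qed

lemma Hs43_imp_sym_cubic:
  assumes f: "f \<in> Hs43"
  obtains \<alpha> \<beta> \<gamma> where "f = sym_cubic \<alpha> \<beta> \<gamma>"
proof -
  from f obtain c where c: "\<And>x. f x = (\<Sum>i\<in>UNIV. \<Sum>j\<in>UNIV. \<Sum>k\<in>UNIV. c i j k * x$i * x$j * x$k)"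
    unfolding Hs43_def cubic_form4_def by blast
  define t where "t i j k = (c i j k + c i k j + c j i k + c j k i + c k i j + c k j i) / 6" for i j k
  have P: "f (vector [a,b,cc,d]) =
      t 1 1 1 * a^3 + t 2 2 2 * b^3 + t 3 3 3 * cc^3 + t 4 4 4 * d^3
    + 3 * (t 1 1 2 * a^2 * b + t 1 1 3 * a^2 * cc + t 1 1 4 * a^2 * d
         + t 2 2 1 * b^2 * a + t 2 2 3 * b^2 * cc + t 2 2 4 * b^2 * d
         + t 3 3 1 * cc^2 * a + t 3 3 2 * cc^2 * b + t 3 3 4 * cc^2 * d
         + t 4 4 1 * d^2 * a + t 4 4 2 * d^2 * b + t 4 4 3 * d^2 * cc)
    + 6 * (t 1 2 3 * a * b * cc + t 1 2 4 * a * b * d + t 1 3 4 * a * cc * d + t 2 3 4 * b * cc * d)"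
    for a b cc d
    unfolding c t_def by (simp add: sum_4 field_simps power2_eq_square power3_eq_cube)
  \<comment> \<open>Each coefficient is a linear combination of values of \<open>f\<close> at points with coordinates in
    \<open>{0,1,2}\<close>, and sorting the coordinates of these points identifies the values.\<close>
  note swaps = Hs43_swap[OF f]
  have pure: "t 2 2 2 = t 1 1 1" "t 3 3 3 = t 1 1 1" "t 4 4 4 = t 1 1 1"
    using P[of 1 0 0 0] P[of 0 1 0 0] P[of 0 0 1 0] P[of 0 0 0 1] by (simp_all add: swaps)
  have mixed: "t 1 1 3 = t 1 1 2" "t 1 1 4 = t 1 1 2" "t 2 2 1 = t 1 1 2" "t 2 2 3 = t 1 1 2"
    "t 2 2 4 = t 1 1 2" "t 3 3 1 = t 1 1 2" "t 3 3 2 = t 1 1 2" "t 3 3 4 = t 1 1 2"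
    "t 4 4 1 = t 1 1 2" "t 4 4 2 = t 1 1 2" "t 4 4 3 = t 1 1 2"
    using P[of 1 1 0 0] P[of 1 0 1 0] P[of 1 0 0 1] P[of 0 1 1 0] P[of 0 1 0 1] P[of 0 0 1 1]
      P[of 2 1 0 0] P[of 2 0 1 0] P[of 2 0 0 1] P[of 1 2 0 0] P[of 0 2 1 0] P[of 0 2 0 1]
      P[of 1 0 2 0] P[of 0 1 2 0] P[of 0 0 2 1] P[of 1 0 0 2] P[of 0 1 0 2] P[of 0 0 1 2] pure
    by (simp_all add: swaps)
  have distinct: "t 1 2 4 = t 1 2 3" "t 1 3 4 = t 1 2 3" "t 2 3 4 = t 1 2 3"
    using P[of 1 1 1 0] P[of 1 1 0 1] P[of 1 0 1 1] P[of 0 1 1 1] pure mixed by (simp_all add: swaps)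
  have "f = sym_cubic (t 1 1 1) (3 * t 1 1 2) (6 * t 1 2 3)"
  proof
    fix x
    show "f x = sym_cubic (t 1 1 1) (3 * t 1 1 2) (6 * t 1 2 3) x"
      by (subst vector4_eta) (simp add: P pure mixed distinct sym_cubic_eq algebra_simps)
  qed
  then show ?thesis by (rule that)
qed

lemma real4_sym_wlog [case_names swap12 swap23 swap34 sorted]:
  fixes P :: "real \<Rightarrow> real \<Rightarrow> real \<Rightarrow> real \<Rightarrow> bool"
  assumes swap12: "\<And>a b c d. P a b c d \<Longrightarrow> P b a c d"
    and swap23: "\<And>a b c d. P a b c d \<Longrightarrow> P a c b d"
    and swap34: "\<And>a b c d. P a b c d \<Longrightarrow> P a b d c"
    and sorted: "\<And>a b c d. d \<le> c \<Longrightarrow> c \<le> b \<Longrightarrow> b \<le> a \<Longrightarrow> P a b c d"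
  shows "P a b c d"
proof -
  have sorted3: "P a b c d" if "c \<le> b" "b \<le> a" for a b c d
  proof -
    consider "d \<le> c" | "c \<le> d" "d \<le> b" | "b \<le> d" "d \<le> a" | "a \<le> d" by linarith
    then show ?thesis
    proof cases
      case 1 then show ?thesis using sorted that by blast
    next
      case 2 then show ?thesis using sorted[of c d b a] swap34 that by blast
    next
      case 3 then show ?thesis using sorted[of c b d a] swap34 swap23 that by blast
    next
      case 4 then show ?thesis using sorted[of c b a d] swap34 swap23 swap12 that by blast
    qed
  qed
  have sorted2: "P a b c d" if "b \<le> a" for a b c d
  proof -
    consider "c \<le> b" | "b \<le> c" "c \<le> a" | "a \<le> c" by linarith
    then show ?thesis
    proof cases
      case 1 then show ?thesis using sorted3 that by blast
    next
      case 2 then show ?thesis using sorted3[of b c a d] swap23 that by blast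
    next
      case 3 then show ?thesis using sorted3[of b a c d] swap23 swap12 that by blast
    qed
  qed
  show ?thesis
    using sorted2[of b a] sorted2[of a b] swap12 by (cases "b \<le> a") auto
qed

lemma Hs43_nonneg_if_nonneg_sorted:
  assumes f: "f \<in> Hs43"
    and nonneg_sorted: "\<And>s u y z. 0 \<le> s \<Longrightarrow> 0 \<le> u \<Longrightarrow> 0 \<le> y \<Longrightarrow> 0 \<le> z \<Longrightarrow>
                   0 \<le> f (vector [s+u+y+z, s+u+y, s+u, s])"
    and x: "\<forall>i. 0 \<le> x$i"
  shows "0 \<le> f x"
proof -
  have "0 \<le> a \<longrightarrow> 0 \<le> b \<longrightarrow> 0 \<le> c \<longrightarrow> 0 \<le> d \<longrightarrow> 0 \<le> f (vector [a,b,c,d])" for a b c d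
  proof (induction a b c d rule: real4_sym_wlog)
    case (sorted a b c d)
    show ?case
      using sorted nonneg_sorted[of d "c - d" "b - c" "a - b"] by simp
  qed (simp_all add: Hs43_swap[OF f] conj_commute)
  then show ?thesis
    using x by (subst vector4_eta) blast
qed

lemma g_sym_cubic:
  "g1 = sym_cubic 0 1 (-3)" "g2 = sym_cubic 3 (-2) 3" "g3 = sym_cubic 0 0 1" "g4 = sym_cubic 1 (-1) 3"
  by (simp_all add: fun_eq_iff g1_def g2_def g3_def g4_def sym_cubic_def)

lemma g_nonneg:
  assumes "\<forall>i. 0 \<le> x$i"
  shows "0 \<le> g1 x" "0 \<le> g2 x" "0 \<le> g3 x" "0 \<le> g4 x"
  unfolding g_sym_cubic
  by (rule Hs43_nonneg_if_nonneg_sorted[OF sym_cubic_in_Hs43 _ assms];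
      simp add: sym_cubic_eq algebra_simps power2_eq_square power3_eq_cube)+

abbreviation g_comb :: "real \<Rightarrow> real \<Rightarrow> real \<Rightarrow> real \<Rightarrow> form4" where
  "g_comb l1 l2 l3 l4 \<equiv> \<lambda>x. l1 * g1 x + l2 * g2 x + l3 * g3 x + l4 * g4 x"

lemma g_comb_sym_cubic:
  "g_comb l1 l2 l3 l4 = sym_cubic (3*l2 + l4) (l1 - 2*l2 - l4) (-3*l1 + 3*l2 + l3 + 3*l4)"
  by (simp add: fun_eq_iff g_sym_cubic sym_cubic_def algebra_simps)

lemma g_comb_in_Ps43:
  assumes "0 \<le> l1" "0 \<le> l2" "0 \<le> l3" "0 \<le> l4"
  shows "g_comb l1 l2 l3 l4 \<in> Ps43"
proof -
  have "0 \<le> g_comb l1 l2 l3 l4 x" if "\<forall>i. 0 \<le> x$i" for x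
    using g_nonneg[OF that] assms by (intro add_nonneg_nonneg mult_nonneg_nonneg)
  moreover have "g_comb l1 l2 l3 l4 \<in> Hs43"
    unfolding g_comb_sym_cubic by (rule sym_cubic_in_Hs43)
  ultimately show ?thesis
    unfolding Ps43_def by blast
qed

lemma g_in_Ps43: "g1 \<in> Ps43" "g2 \<in> Ps43" "g3 \<in> Ps43" "g4 \<in> Ps43"
  using g_comb_in_Ps43[of 1 0 0 0] g_comb_in_Ps43[of 0 1 0 0]
    g_comb_in_Ps43[of 0 0 1 0] g_comb_in_Ps43[of 0 0 0 1]
  by simp_all

lemma Ps43_nonneg_at: "f \<in> Ps43 \<Longrightarrow> 0 \<le> a \<Longrightarrow> 0 \<le> b \<Longrightarrow> 0 \<le> c \<Longrightarrow> 0 \<le> d \<Longrightarrow> 0 \<le> f (vector [a,b,c,d])"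
  unfolding Ps43_def by (auto simp: forall_4)

text \<open>Since \<open>g1 + 3 g4 = g2 + 3 g3\<close>, the coefficients are not unique; we take the least
  admissible coefficient of \<open>g4\<close>.\<close>
lemma Hs43_nonneg_at_test_points_imp_g_comb:
  assumes f: "f \<in> Hs43"
    and nonneg: "0 \<le> f (vector [1,0,0,0])" "0 \<le> f (vector [1,1,0,0])"
      "0 \<le> f (vector [1,1,1,0])" "0 \<le> f (vector [1,1,1,1])"
  obtains l1 l2 l3 l4 where "0 \<le> l1" "0 \<le> l2" "0 \<le> l3" "0 \<le> l4" "f = g_comb l1 l2 l3 l4"
proof -
  obtain \<alpha> \<beta> \<gamma> where fe: "f = sym_cubic \<alpha> \<beta> \<gamma>"
    using Hs43_imp_sym_cubic[OF f] .
  define l4 where "l4 = max 0 (-2*\<alpha> - 3*\<beta>)"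
  define l2 where "l2 = (\<alpha> - l4) / 3"
  define l1 where "l1 = \<alpha> + \<beta> - l2"
  define l3 where "l3 = \<alpha> + 3*\<beta> + \<gamma> - l4"
  have "l4 \<le> \<alpha>" "l4 \<le> \<alpha> + 3*\<beta> + \<gamma>"
    using nonneg unfolding fe sym_cubic_at l4_def by auto
  then have "0 \<le> l1" "0 \<le> l2" "0 \<le> l3" "0 \<le> l4"
    unfolding l1_def l2_def l3_def l4_def by auto
  moreover have "f = g_comb l1 l2 l3 l4"
    unfolding g_comb_sym_cubic fe
    by (rule arg_cong3[where f = sym_cubic]) (simp_all add: l1_def l2_def l3_def field_simps)
  ultimately show ?thesis by (rule that)
qed

lemma Ps43_imp_g_comb:
  assumes "f \<in> Ps43"
  obtains l1 l2 l3 l4 where "0 \<le> l1" "0 \<le> l2" "0 \<le> l3" "0 \<le> l4" "f = g_comb l1 l2 l3 l4"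
proof (rule Hs43_nonneg_at_test_points_imp_g_comb)
  show "f \<in> Hs43" using assms unfolding Ps43_def by blast
qed (simp_all add: that Ps43_nonneg_at[OF assms])

lemma Ps43_eq_cone:
  "Ps43 = {g_comb l1 l2 l3 l4 | l1 l2 l3 l4. 0 \<le> l1 \<and> 0 \<le> l2 \<and> 0 \<le> l3 \<and> 0 \<le> l4}"
  using Ps43_imp_g_comb g_comb_in_Ps43 by blast

lemma Ps43_scale:
  assumes "f \<in> Ps43" "0 \<le> t"
  shows "(\<lambda>x. t * f x) \<in> Ps43"
proof -
  obtain l1 l2 l3 l4 where l: "0 \<le> l1" "0 \<le> l2" "0 \<le> l3" "0 \<le> l4" "f = g_comb l1 l2 l3 l4"
    using Ps43_imp_g_comb[OF assms(1)] .
  have "(\<lambda>x. t * f x) = g_comb (t * l1) (t * l2) (t * l3) (t * l4)"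
    by (simp add: l(5) fun_eq_iff algebra_simps)
  then show ?thesis
    using g_comb_in_Ps43 l assms(2) by simp
qed

lemma g_at:
  "g1 (vector [1,0,0,0]) = 0" "g1 (vector [1,1,0,0]) = 2" "g1 (vector [1,1,1,0]) = 3" "g1 (vector [1,1,1,1]) = 0"
  "g2 (vector [1,0,0,0]) = 3" "g2 (vector [1,1,0,0]) = 2" "g2 (vector [1,1,1,0]) = 0" "g2 (vector [1,1,1,1]) = 0"
  "g3 (vector [1,0,0,0]) = 0" "g3 (vector [1,1,0,0]) = 0" "g3 (vector [1,1,1,0]) = 1" "g3 (vector [1,1,1,1]) = 4"
  "g4 (vector [1,0,0,0]) = 1" "g4 (vector [1,1,0,0]) = 0" "g4 (vector [1,1,1,0]) = 0" "g4 (vector [1,1,1,1]) = 4"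
  by (simp_all add: g_sym_cubic sym_cubic_at)

lemma g_nonzero: "g1 \<noteq> (\<lambda>x. 0)" "g2 \<noteq> (\<lambda>x. 0)" "g3 \<noteq> (\<lambda>x. 0)" "g4 \<noteq> (\<lambda>x. 0)"
  using g_at(2,5,11,13) by (metis zero_neq_numeral zero_neq_one)+

lemma in_rayI: "0 \<le> t \<Longrightarrow> (\<lambda>x. t * f x) \<in> ray f"
  unfolding ray_def by blast

lemma ray_scale:
  assumes "0 < t"
  shows "ray (\<lambda>x. t * f x) = ray f"
proof -
  have "(\<exists>s. g = (\<lambda>x. s * (t * f x)) \<and> 0 \<le> s) \<longleftrightarrow> (\<exists>s. g = (\<lambda>x. s * f x) \<and> 0 \<le> s)" for g
  proof
    assume "\<exists>s. g = (\<lambda>x. s * (t * f x)) \<and> 0 \<le> s"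
    then show "\<exists>s. g = (\<lambda>x. s * f x) \<and> 0 \<le> s"
      using assms by (metis mult.assoc mult_nonneg_nonneg less_imp_le)
  next
    assume "\<exists>s. g = (\<lambda>x. s * f x) \<and> 0 \<le> s"
    then obtain s where "g = (\<lambda>x. s * f x)" "0 \<le> s" by blast
    then show "\<exists>s. g = (\<lambda>x. s * (t * f x)) \<and> 0 \<le> s"
      using assms by (intro exI[of _ "s / t"]) (simp add: fun_eq_iff)
  qed
  then show ?thesis unfolding ray_def by blast
qed

lemma ray_imp_pos_multiple:
  assumes "f \<in> ray G" "f \<noteq> (\<lambda>x. 0)"
  obtains t where "0 < t" "f = (\<lambda>x. t * G x)"
proof -
  obtain t where "0 \<le> t" "f = (\<lambda>x. t * G x)" using assms(1) unfolding ray_def by blast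
  moreover have "t \<noteq> 0" using assms(2) calculation(2) by auto
  ultimately show ?thesis using that[of t] by simp
qed

lemma extremal_in_imp_in_ray:
  assumes "extremal_in P f" "g \<in> P" "h \<in> P" "f = (\<lambda>x. g x + h x)" "g \<noteq> (\<lambda>x. 0)"
  shows "f \<in> ray g"
proof -
  from assms(1-4) have "g \<in> ray f" unfolding extremal_in_def by blast
  then obtain t where t: "0 \<le> t" "g = (\<lambda>x. t * f x)" unfolding ray_def by blast
  with assms(5) have "0 < t" by fastforce
  then have "f = (\<lambda>x. (1 / t) * g x)" by (simp add: t(2))
  then show ?thesis using \<open>0 < t\<close> in_rayI[of "1 / t" g] by simp
qed

lemma extremal_in_if_vanishing_face:
  assumes "G \<in> P" "G \<noteq> (\<lambda>x. 0)"
    and nonneg: "\<And>f z. f \<in> P \<Longrightarrow> z \<in> Z \<Longrightarrow> 0 \<le> f z"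
    and vanish: "\<And>z. z \<in> Z \<Longrightarrow> G z = 0"
    and face: "\<And>f. f \<in> P \<Longrightarrow> \<forall>z\<in>Z. f z = 0 \<Longrightarrow> f \<in> ray G"
  shows "extremal_in P G"
  unfolding extremal_in_def
proof (intro conjI allI impI assms(1,2))
  fix g h assume g: "g \<in> P" and h: "h \<in> P" and G: "G = (\<lambda>x. g x + h x)"
  have "g z = 0 \<and> h z = 0" if "z \<in> Z" for z
    using vanish[OF that] nonneg[OF g that] nonneg[OF h that] fun_cong[OF G, of z] by simp
  then show "g \<in> ray G" "h \<in> ray G" using face g h by auto
qed

lemma Ps43_vanishing_imp_ray:
  assumes "f \<in> Ps43"
  shows "f (vector [1,0,0,0]) = 0 \<Longrightarrow> f (vector [1,1,1,1]) = 0 \<Longrightarrow> f \<in> ray g1"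
    and "f (vector [1,1,1,0]) = 0 \<Longrightarrow> f (vector [1,1,1,1]) = 0 \<Longrightarrow> f \<in> ray g2"
    and "f (vector [1,0,0,0]) = 0 \<Longrightarrow> f (vector [1,1,0,0]) = 0 \<Longrightarrow> f \<in> ray g3"
    and "f (vector [1,1,0,0]) = 0 \<Longrightarrow> f (vector [1,1,1,0]) = 0 \<Longrightarrow> f \<in> ray g4"
proof -
  obtain l1 l2 l3 l4 where l: "0 \<le> l1" "0 \<le> l2" "0 \<le> l3" "0 \<le> l4" and f: "f = g_comb l1 l2 l3 l4"
    using Ps43_imp_g_comb[OF assms] .
  have at: "f (vector [1,0,0,0]) = 3*l2 + l4" "f (vector [1,1,0,0]) = 2*l1 + 2*l2"
    "f (vector [1,1,1,0]) = 3*l1 + l3" "f (vector [1,1,1,1]) = 4*l3 + 4*l4"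
    by (simp_all add: f g_at)
  show "f \<in> ray g1" if "f (vector [1,0,0,0]) = 0" "f (vector [1,1,1,1]) = 0"
  proof -
    have "l2 = 0" "l3 = 0" "l4 = 0" using that l at by linarith+
    then show ?thesis using in_rayI[OF l(1), of g1] by (simp add: f)
  qed
  show "f \<in> ray g2" if "f (vector [1,1,1,0]) = 0" "f (vector [1,1,1,1]) = 0"
  proof -
    have "l1 = 0" "l3 = 0" "l4 = 0" using that l at by linarith+
    then show ?thesis using in_rayI[OF l(2), of g2] by (simp add: f)
  qed
  show "f \<in> ray g3" if "f (vector [1,0,0,0]) = 0" "f (vector [1,1,0,0]) = 0"
  proof -
    have "l1 = 0" "l2 = 0" "l4 = 0" using that l at by linarith+
    then show ?thesis using in_rayI[OF l(3), of g3] by (simp add: f)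
  qed
  show "f \<in> ray g4" if "f (vector [1,1,0,0]) = 0" "f (vector [1,1,1,0]) = 0"
  proof -
    have "l1 = 0" "l2 = 0" "l3 = 0" using that l at by linarith+
    then show ?thesis using in_rayI[OF l(4), of g4] by (simp add: f)
  qed
qed

lemma extremal_in_Ps43_if_face:
  assumes "G \<in> Ps43" "G \<noteq> (\<lambda>x. 0)" "0 < t"
    and "G p = 0" "G q = 0" "\<forall>i. 0 \<le> p$i" "\<forall>i. 0 \<le> q$i"
    and face: "\<And>f. f \<in> Ps43 \<Longrightarrow> f p = 0 \<Longrightarrow> f q = 0 \<Longrightarrow> f \<in> ray G"
  shows "extremal_in Ps43 (\<lambda>x. t * G x)"
proof (rule extremal_in_if_vanishing_face[where Z = "{p, q}"])
  show "(\<lambda>x. t * G x) \<in> Ps43" using Ps43_scale assms(1,3) by simp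
  show "(\<lambda>x. t * G x) \<noteq> (\<lambda>x. 0)" using assms(2,3) by (auto simp: fun_eq_iff)
  show "\<And>f z. f \<in> Ps43 \<Longrightarrow> z \<in> {p, q} \<Longrightarrow> 0 \<le> f z" using assms(6,7) by (auto simp: Ps43_def)
  show "\<And>z. z \<in> {p, q} \<Longrightarrow> t * G z = 0" using assms(4,5) by auto
  show "\<And>f. f \<in> Ps43 \<Longrightarrow> \<forall>z\<in>{p, q}. f z = 0 \<Longrightarrow> f \<in> ray (\<lambda>x. t * G x)"
    using face ray_scale[OF assms(3)] by simp
qed

lemma extremal_in_Ps43_g:
  assumes "0 < t"
  shows "extremal_in Ps43 (\<lambda>x. t * g1 x)" "extremal_in Ps43 (\<lambda>x. t * g2 x)"
    "extremal_in Ps43 (\<lambda>x. t * g3 x)" "extremal_in Ps43 (\<lambda>x. t * g4 x)"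
proof -
  show "extremal_in Ps43 (\<lambda>x. t * g1 x)"
    by (rule extremal_in_Ps43_if_face[OF g_in_Ps43(1) g_nonzero(1) assms, of "vector [1,0,0,0]" "vector [1,1,1,1]"])
       (simp_all add: g_at forall_4 Ps43_vanishing_imp_ray)
  show "extremal_in Ps43 (\<lambda>x. t * g2 x)"
    by (rule extremal_in_Ps43_if_face[OF g_in_Ps43(2) g_nonzero(2) assms, of "vector [1,1,1,0]" "vector [1,1,1,1]"])
       (simp_all add: g_at forall_4 Ps43_vanishing_imp_ray)
  show "extremal_in Ps43 (\<lambda>x. t * g3 x)"
    by (rule extremal_in_Ps43_if_face[OF g_in_Ps43(3) g_nonzero(3) assms, of "vector [1,0,0,0]" "vector [1,1,0,0]"])
       (simp_all add: g_at forall_4 Ps43_vanishing_imp_ray)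
  show "extremal_in Ps43 (\<lambda>x. t * g4 x)"
    by (rule extremal_in_Ps43_if_face[OF g_in_Ps43(4) g_nonzero(4) assms, of "vector [1,1,0,0]" "vector [1,1,1,0]"])
       (simp_all add: g_at forall_4 Ps43_vanishing_imp_ray)
qed

lemma extremal_in_Ps43_imp_ray_g:
  assumes ext: "extremal_in Ps43 f"
  shows "f \<in> ray g1 \<or> f \<in> ray g2 \<or> f \<in> ray g3 \<or> f \<in> ray g4"
proof -
  have summand: "f \<in> ray G"
    if "0 < l" "G \<in> Ps43" "G \<noteq> (\<lambda>x. 0)" "h \<in> Ps43" "f = (\<lambda>x. l * G x + h x)" for l G h
  proof -
    have "(\<lambda>x. l * G x) \<noteq> (\<lambda>x. 0)" using that(1,3) by (auto simp: fun_eq_iff)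
    then have "f \<in> ray (\<lambda>x. l * G x)"
      using extremal_in_imp_in_ray[OF ext Ps43_scale[OF that(2)] that(4,5)] that(1) by simp
    then show ?thesis using ray_scale[OF that(1)] by simp
  qed
  obtain l1 l2 l3 l4 where l: "0 \<le> l1" "0 \<le> l2" "0 \<le> l3" "0 \<le> l4" and f: "f = g_comb l1 l2 l3 l4"
    using ext Ps43_imp_g_comb unfolding extremal_in_def by blast
  have "f \<noteq> (\<lambda>x. 0)" using ext unfolding extremal_in_def by blast
  then consider "0 < l1" | "0 < l2" | "0 < l3" | "0 < l4"
    using l f by fastforce
  then show ?thesis
  proof cases
    case 1
    show ?thesis
      using summand[OF 1 g_in_Ps43(1) g_nonzero(1) g_comb_in_Ps43[of 0 l2 l3 l4]] l f
      by (simp add: algebra_simps)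
  next
    case 2
    show ?thesis
      using summand[OF 2 g_in_Ps43(2) g_nonzero(2) g_comb_in_Ps43[of l1 0 l3 l4]] l f
      by (simp add: algebra_simps)
  next
    case 3
    show ?thesis
      using summand[OF 3 g_in_Ps43(3) g_nonzero(3) g_comb_in_Ps43[of l1 l2 0 l4]] l f
      by (simp add: algebra_simps)
  next
    case 4
    show ?thesis
      using summand[OF 4 g_in_Ps43(4) g_nonzero(4) g_comb_in_Ps43[of l1 l2 l3 0]] l f
      by (simp add: algebra_simps)
  qed
qed

lemma atLeastAtMost_1_4: "{1..4::nat} = {1, 2, 3, 4}"
  by auto

lemma extremal_rays_Ps43: "{f. extremal_in Ps43 f} = (\<Union>i\<in>{1..4}. ray (gen i) - {\<lambda>x. 0})"
  unfolding atLeastAtMost_1_4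
proof (intro set_eqI iffI)
  fix f assume "f \<in> {f. extremal_in Ps43 f}"
  then show "f \<in> (\<Union>i\<in>{1, 2, 3, 4}. ray (gen i) - {\<lambda>x. 0})"
    using extremal_in_Ps43_imp_ray_g[of f] unfolding extremal_in_def by (auto simp: gen_def)
next
  fix f assume "f \<in> (\<Union>i\<in>{1, 2, 3, 4}. ray (gen i) - {\<lambda>x. 0})"
  then obtain i where i: "i \<in> {1, 2, 3, 4}" and f: "f \<in> ray (gen i)" "f \<noteq> (\<lambda>x. 0)"
    by blast
  obtain t where "0 < t" "f = (\<lambda>x. t * gen i x)" using ray_imp_pos_multiple[OF f] .
  with i show "f \<in> {f. extremal_in Ps43 f}"
    using extremal_in_Ps43_g by (auto simp: gen_def)
qed

lemma extremal_in_Ps43_gen: "i \<in> {1..4} \<Longrightarrow> extremal_in Ps43 (gen i)"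
  using extremal_in_Ps43_g[of 1] unfolding atLeastAtMost_1_4 by (auto simp: gen_def)

lemma ray_gen_inj:
  assumes "i \<in> {1..4}" "j \<in> {1..4}" "ray (gen i) = ray (gen j)"
  shows "i = j"
proof -
  have "gen i \<in> ray (gen j)" using in_rayI[of 1 "gen i"] assms(3) by simp
  then obtain t where "gen i = (\<lambda>x. t * gen j x)" unfolding ray_def by blast
  then have "gen i (vector [1,0,0,0]) = t * gen j (vector [1,0,0,0])"
    "gen i (vector [1,1,0,0]) = t * gen j (vector [1,1,0,0])"
    "gen i (vector [1,1,1,0]) = t * gen j (vector [1,1,1,0])"
    "gen i (vector [1,1,1,1]) = t * gen j (vector [1,1,1,1])" by simp_all
  with assms(1,2) show "i = j" unfolding atLeastAtMost_1_4 by (auto simp: gen_def g_at)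
qed

lemma Hs43_unique_g123:
  assumes "f \<in> Hs43"
  shows "\<exists>!(a, b, c). f = (\<lambda>x. a * g1 x + b * g2 x + c * g3 x)"
proof -
  obtain \<alpha> \<beta> \<gamma> where f: "f = sym_cubic \<alpha> \<beta> \<gamma>" using Hs43_imp_sym_cubic[OF assms] .
  have comb: "(\<lambda>x. a * g1 x + b * g2 x + c * g3 x) = sym_cubic (3*b) (a - 2*b) (-3*a + 3*b + c)" for a b c
    using g_comb_sym_cubic[of a b c 0] by simp
  show ?thesis
  proof (rule ex1I[of _ "(\<beta> + 2*\<alpha>/3, \<alpha>/3, \<gamma> + 3*\<beta> + \<alpha>)"])
    show "case (\<beta> + 2*\<alpha>/3, \<alpha>/3, \<gamma> + 3*\<beta> + \<alpha>) of (a, b, c) \<Rightarrow> f = (\<lambda>x. a * g1 x + b * g2 x + c * g3 x)"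
      unfolding f comb by simp
  next
    fix p assume "case p of (a, b, c) \<Rightarrow> f = (\<lambda>x. a * g1 x + b * g2 x + c * g3 x)"
    then show "p = (\<beta> + 2*\<alpha>/3, \<alpha>/3, \<gamma> + 3*\<beta> + \<alpha>)"
      unfolding f comb by (auto dest!: sym_cubic_inject)
  qed
qed

theorem proposition1p6:
  shows
   "(\<forall>f\<in>Hs43. \<exists>!(a, b, c). f = (\<lambda>x. a * g1 x + b * g2 x + c * g3 x))
    \<and> Ps43 = {(\<lambda>x. l1 * g1 x + l2 * g2 x + l3 * g3 x + l4 * g4 x) | l1 l2 l3 l4.
                 0 \<le> l1 \<and> 0 \<le> l2 \<and> 0 \<le> l3 \<and> 0 \<le> l4}
    \<and> {f. extremal_in Ps43 f} = (\<Union>i\<in>{1..4}. ray (gen i) - {\<lambda>x. 0})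
    \<and> (\<forall>i\<in>{1..4::nat}. \<forall>j\<in>{1..4}. i \<noteq> j \<longrightarrow> ray (gen i) \<noteq> ray (gen j))
    \<and> (\<forall>i\<in>{1..4::nat}. extremal_in Ps43 (gen i))
    \<and> (\<forall>f\<in>Ps43. f (vector [1,0,0,0]) = 0 \<and> f (vector [1,1,1,1]) = 0 \<longrightarrow> f \<in> ray g1)
    \<and> (\<forall>f\<in>Ps43. f (vector [1,1,1,0]) = 0 \<and> f (vector [1,1,1,1]) = 0 \<longrightarrow> f \<in> ray g2)
    \<and> (\<forall>f\<in>Ps43. f (vector [1,0,0,0]) = 0 \<and> f (vector [1,1,0,0]) = 0 \<longrightarrow> f \<in> ray g3)
    \<and> (\<forall>f\<in>Ps43. f (vector [1,1,0,0]) = 0 \<and> f (vector [1,1,1,0]) = 0 \<longrightarrow> f \<in> ray g4)"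
proof (intro conjI Ps43_eq_cone extremal_rays_Ps43)
  show "\<forall>f\<in>Hs43. \<exists>!(a, b, c). f = (\<lambda>x. a * g1 x + b * g2 x + c * g3 x)"
    using Hs43_unique_g123 by blast
  show "\<forall>i\<in>{1..4::nat}. \<forall>j\<in>{1..4}. i \<noteq> j \<longrightarrow> ray (gen i) \<noteq> ray (gen j)"
    using ray_gen_inj by blast
  show "\<forall>i\<in>{1..4::nat}. extremal_in Ps43 (gen i)"
    using extremal_in_Ps43_gen by blast
qed (use Ps43_vanishing_imp_ray in blast)+

end
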